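(* Let $k\in\{3,4,\dots\}$, let $\mathcal A=(A,\mathrm{cl})\in PG(\mathcal C_k)$ and let $C\subseteq A$ with $C\unlhd_\infty\mathcal A$. Then $C\unlhd_k\mathcal A$.
   Context: A set system is a pair $(A;R)$ where $R$ is a set of finite non-empty subsets of $A$; for $X\subseteq A$, $R[X]=\{r\in R:r\subseteq X\}$ and $\delta(X)=|X|-|R[X]|$. $\mathcal C=\mathcal C_\infty$ is the class of finite set systems with $\delta(X)\ge0$ for all $X\subseteq A$, and $\mathcal C_k$ is the class of members of $\mathcal C$ all of whose sets in $R$ have size at most $k$. $X\le(A;R)$ means $\delta(X)\le\delta(X')$ for all $X\subseteq X'\subseteq A$. For $(A;R)\in\mathcal C$, $d(X)=\min\{\delta(Y):X\subseteq Y\subseteq A\}$, $\mathrm{cl}(X)=\{y:d(X\cup\{y\})=d(X)\}$, and $PG(A;R)=(A,\mathrm{cl})$. A presentation of a matroid $\mathcal A$ is a set system $(A;R)\in\mathcal C$ with $PG(A;R)=\mathcal A$; $PG(\mathcal C_k)$ is the class of matroids having a presentation in $\mathcal C_k$. For $k\in\{3,4,\dots,\infty\}$ and $C\subseteq A$, $C\unlhd_k\mathcal A$ means there is a presentation $(A;R)\in\mathcal C_k$ of $\mathcal A$ with $C\le(A;R)$. *)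

theory Defs
  imports Main "HOL-Library.Extended_Nat"
begin

definition R_in :: "'a set set \<Rightarrow> 'a set \<Rightarrow> 'a set set" where
  "R_in R X = {r \<in> R. r \<subseteq> X}"

definition delta :: "'a set set \<Rightarrow> 'a set \<Rightarrow> int" where
  "delta R X = int (card X) - int (card (R_in R X))"

text \<open>Membership in C_k, with k an extended natural; k = \<infinity> gives C = C_\<infinity>.\<close>
definition in_C :: "enat \<Rightarrow> 'a set \<Rightarrow> 'a set set \<Rightarrow> bool" where
  "in_C k A R \<longleftrightarrow> finite A \<and> (\<forall>r\<in>R. finite r \<and> r \<noteq> {} \<and> r \<subseteq> A)
     \<and> (\<forall>X. X \<subseteq> A \<longrightarrow> delta R X \<ge> 0)
     \<and> (\<forall>r\<in>R. enat (card r) \<le> k)"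

definition self_sufficient :: "'a set \<Rightarrow> 'a set set \<Rightarrow> 'a set \<Rightarrow> bool" where
  "self_sufficient A R X \<longleftrightarrow> X \<subseteq> A \<and>
     (\<forall>X'. X \<subseteq> X' \<and> X' \<subseteq> A \<longrightarrow> delta R X \<le> delta R X')"

definition dim :: "'a set \<Rightarrow> 'a set set \<Rightarrow> 'a set \<Rightarrow> int" where
  "dim A R X = Min {delta R Y | Y. X \<subseteq> Y \<and> Y \<subseteq> A}"

definition pg_cl :: "'a set \<Rightarrow> 'a set set \<Rightarrow> 'a set \<Rightarrow> 'a set" where
  "pg_cl A R X = {y \<in> A. dim A R (X \<union> {y}) = dim A R X}"

definition presentation :: "enat \<Rightarrow> 'a set \<Rightarrow> ('a set \<Rightarrow> 'a set) \<Rightarrow> 'a set set \<Rightarrow> bool" where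
  "presentation k A cl R \<longleftrightarrow> in_C k A R \<and> (\<forall>X. X \<subseteq> A \<longrightarrow> pg_cl A R X = cl X)"

definition in_PG :: "enat \<Rightarrow> 'a set \<Rightarrow> ('a set \<Rightarrow> 'a set) \<Rightarrow> bool" where
  "in_PG k A cl \<longleftrightarrow> (\<exists>R. presentation k A cl R)"

definition strong_sub :: "enat \<Rightarrow> 'a set \<Rightarrow> ('a set \<Rightarrow> 'a set) \<Rightarrow> 'a set \<Rightarrow> bool" where
  "strong_sub k A cl C \<longleftrightarrow> (\<exists>R. presentation k A cl R \<and> self_sufficient A R C)"

end

theory Submission
  imports Defs
begin

(* Start from a presentation (A;R) in C_\<infinity> in which C is
   self-sufficient.  Shrink the sets of R one point at a time, as long as the dimension
   function d stays unchanged; shrinking never increases the predimension delta, so C stays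
   self-sufficient.  At a shrinking g that cannot be reduced further, every shrunk set g r is
   a "circuit": d (g r) = |g r| - 1, and g is injective.  For every flat F, the number of
   shrunk sets contained in F equals |F| - d F, a quantity depending only on the matroid;
   the same holds for the sets of any other presentation S.  Inverting these counts over
   the finite lattice of flats shows that the closures of the shrunk sets and of the sets
   of S agree with multiplicities; in particular each g r has the closure of some s \<in> S,
   hence |g r| - 1 = d s \<le> |s| - 1 \<le> k - 1.  Thus g`R is a presentation in C_k in which
   C is still self-sufficient.

   The argument works for every bound k. *)

definition covered :: "'i set \<Rightarrow> ('i \<Rightarrow> 'a set) \<Rightarrow> 'a set \<Rightarrow> nat" where
  "covered I g X = card {i\<in>I. g i \<subseteq> X}"

definition defect :: "'i set \<Rightarrow> ('i \<Rightarrow> 'a set) \<Rightarrow> 'a set \<Rightarrow> int" where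
  "defect I g X = int (card X) - int (covered I g X)"

lemma delta_eq_defect: "delta R X = defect R id X"
  unfolding delta_def defect_def covered_def R_in_def by simp

lemma covered_supermodular:
  assumes "finite I"
  shows "covered I g X + covered I g Y \<le> covered I g (X \<union> Y) + covered I g (X \<inter> Y)"
proof -
  let ?S = "\<lambda>Z. {i\<in>I. g i \<subseteq> Z}"
  have fin: "\<And>Z. finite (?S Z)" using assms by auto
  have "card (?S X) + card (?S Y) = card (?S X \<union> ?S Y) + card (?S X \<inter> ?S Y)"
    using card_Un_Int[OF fin fin] .
  also have "?S X \<inter> ?S Y = ?S (X \<inter> Y)" by auto
  also have "card (?S X \<union> ?S Y) \<le> card (?S (X \<union> Y))"
    by (rule card_mono[OF fin]) auto
  finally show ?thesis unfolding covered_def by simp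
qed

lemma defect_submodular:
  assumes "finite I" "finite X" "finite Y"
  shows "defect I g (X \<union> Y) + defect I g (X \<inter> Y) \<le> defect I g X + defect I g Y"
  using card_Un_Int[OF assms(2,3)] covered_supermodular[OF assms(1), of g X Y]
  unfolding defect_def by linarith

lemma card_fibres_eq:
  fixes Fl :: "'a set set" and f1 :: "'i \<Rightarrow> 'a set" and f2 :: "'j \<Rightarrow> 'a set"
  assumes finFl: "finite Fl" and finF: "\<forall>F\<in>Fl. finite F"
    and fin1: "finite I1" and fin2: "finite I2"
    and in1: "\<forall>i\<in>I1. f1 i \<in> Fl" and in2: "\<forall>j\<in>I2. f2 j \<in> Fl"
    and below: "\<forall>F\<in>Fl. card {i\<in>I1. f1 i \<subseteq> F} = card {j\<in>I2. f2 j \<subseteq> F}"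
  shows "G \<in> Fl \<Longrightarrow> card {i\<in>I1. f1 i = G} = card {j\<in>I2. f2 j = G}"
proof (induction "card G" arbitrary: G rule: less_induct)
  case (less G)
  let ?P = "{F\<in>Fl. F \<subset> G}"
  have finP: "finite ?P" using finFl by auto
  have split: "card {i\<in>I. f i \<subseteq> G} = card {i\<in>I. f i = G} + (\<Sum>F\<in>?P. card {i\<in>I. f i = F})"
    if fin: "finite I" and mem: "\<forall>i\<in>I. f i \<in> Fl" for I and f :: "'k \<Rightarrow> 'a set"
  proof -
    have "{i\<in>I. f i \<subseteq> G} = {i\<in>I. f i = G} \<union> (\<Union>F\<in>?P. {i\<in>I. f i = F})"
      using mem by auto
    moreover have "card (\<Union>F\<in>?P. {i\<in>I. f i = F}) = (\<Sum>F\<in>?P. card {i\<in>I. f i = F})"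
      by (rule card_UN_disjoint) (use finP fin in auto)
    moreover have "card ({i\<in>I. f i = G} \<union> (\<Union>F\<in>?P. {i\<in>I. f i = F}))
        = card {i\<in>I. f i = G} + card (\<Union>F\<in>?P. {i\<in>I. f i = F})"
      by (rule card_Un_disjoint) (use fin in \<open>auto intro: rev_finite_subset\<close>)
    ultimately show ?thesis by simp
  qed
  have "card {i\<in>I1. f1 i = F} = card {j\<in>I2. f2 j = F}" if "F \<in> ?P" for F
    using that finF less psubset_card_mono by auto
  then have "(\<Sum>F\<in>?P. card {i\<in>I1. f1 i = F}) = (\<Sum>F\<in>?P. card {j\<in>I2. f2 j = F})"
    by (rule sum.cong[OF refl])
  with split[OF fin1 in1] split[OF fin2 in2] below less.prems show ?case by force
qed

locale set_system =
  fixes A :: "'a set" and R :: "'a set set"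
  assumes finite_A: "finite A"
    and edges: "\<forall>r\<in>R. finite r \<and> r \<noteq> {} \<and> r \<subseteq> A"
    and delta_nonneg: "\<forall>X. X \<subseteq> A \<longrightarrow> delta R X \<ge> 0"
begin

abbreviation "cl \<equiv> pg_cl A R"
abbreviation "d \<equiv> dim A R"

lemma finite_R: "finite R"
  using edges finite_A by (metis Pow_iff finite_Pow_iff rev_finite_subset subsetI)

lemma finite_subset_A: "X \<subseteq> A \<Longrightarrow> finite X"
  using finite_A by (rule rev_finite_subset)

lemma finite_supersets: "finite {delta R Y |Y. X \<subseteq> Y \<and> Y \<subseteq> A}"
proof -
  have "{delta R Y |Y. X \<subseteq> Y \<and> Y \<subseteq> A} = delta R ` {Y. X \<subseteq> Y \<and> Y \<subseteq> A}" by blast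
  moreover have "finite {Y. X \<subseteq> Y \<and> Y \<subseteq> A}" using finite_A by auto
  ultimately show ?thesis by simp
qed

lemma dim_le: "X \<subseteq> Y \<Longrightarrow> Y \<subseteq> A \<Longrightarrow> d X \<le> delta R Y"
  unfolding dim_def by (rule Min_le[OF finite_supersets]) blast

lemma dim_attained:
  assumes "X \<subseteq> A"
  obtains Y where "X \<subseteq> Y" "Y \<subseteq> A" "delta R Y = d X"
proof -
  have "{delta R Y |Y. X \<subseteq> Y \<and> Y \<subseteq> A} \<noteq> {}" using assms by blast
  then have "d X \<in> {delta R Y |Y. X \<subseteq> Y \<and> Y \<subseteq> A}"
    unfolding dim_def by (rule Min_in[OF finite_supersets])
  then show ?thesis using that by auto
qed

lemma dim_nonneg: "X \<subseteq> A \<Longrightarrow> d X \<ge> 0"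
  by (metis dim_attained delta_nonneg)

lemma dim_mono: "X \<subseteq> X' \<Longrightarrow> X' \<subseteq> A \<Longrightarrow> d X \<le> d X'"
  by (metis dim_attained dim_le order_trans)

lemma dim_empty: "d {} = 0"
proof -
  have "R_in R {} = {}" unfolding R_in_def using edges by auto
  then have "delta R {} = 0" unfolding delta_def by simp
  then show ?thesis using dim_le[of "{}" "{}"] dim_nonneg[of "{}"] by simp
qed

lemma dim_insert_le: "X \<subseteq> A \<Longrightarrow> x \<in> A \<Longrightarrow> d (insert x X) \<le> d X + 1"
proof -
  assume X: "X \<subseteq> A" and x: "x \<in> A"
  obtain Y where Y: "X \<subseteq> Y" "Y \<subseteq> A" "delta R Y = d X" using dim_attained[OF X] .
  have "card (R_in R Y) \<le> card (R_in R (insert x Y))"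
    by (rule card_mono) (use finite_R in \<open>auto simp: R_in_def\<close>)
  moreover have "card (insert x Y) \<le> Suc (card Y)"
    by (simp add: card_insert_if finite_subset_A[OF Y(2)])
  ultimately have "delta R (insert x Y) \<le> delta R Y + 1" unfolding delta_def by linarith
  moreover have "d (insert x X) \<le> delta R (insert x Y)"
    by (rule dim_le) (use Y x in auto)
  ultimately show ?thesis using Y by linarith
qed

lemma dim_submodular:
  assumes "X \<subseteq> A" "Y \<subseteq> A"
  shows "d (X \<union> Y) + d (X \<inter> Y) \<le> d X + d Y"
proof -
  obtain X' where X': "X \<subseteq> X'" "X' \<subseteq> A" "delta R X' = d X" using dim_attained[OF assms(1)] .
  obtain Y' where Y': "Y \<subseteq> Y'" "Y' \<subseteq> A" "delta R Y' = d Y" using dim_attained[OF assms(2)] .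
  have "d (X \<union> Y) \<le> delta R (X' \<union> Y')" "d (X \<inter> Y) \<le> delta R (X' \<inter> Y')"
    using X' Y' by (auto intro: dim_le)
  moreover have "delta R (X' \<union> Y') + delta R (X' \<inter> Y') \<le> delta R X' + delta R Y'"
    unfolding delta_eq_defect
    by (rule defect_submodular[OF finite_R]) (use X' Y' finite_subset_A in auto)
  ultimately show ?thesis using X' Y' by linarith
qed

lemma closure_subset_A: "cl X \<subseteq> A"
  unfolding pg_cl_def by auto

lemma closure_extensive: "X \<subseteq> A \<Longrightarrow> X \<subseteq> cl X"
  unfolding pg_cl_def by (auto simp: insert_absorb)

lemma dim_insert:
  assumes "X \<subseteq> A" "x \<in> A"
  shows "d (insert x X) = d X + (if x \<in> cl X then 0 else 1)"
proof -
  have "d X \<le> d (insert x X)" by (rule dim_mono) (use assms in auto)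
  moreover have "x \<in> cl X \<longleftrightarrow> d (insert x X) = d X" using assms unfolding pg_cl_def by auto
  ultimately show ?thesis using dim_insert_le[OF assms] by auto
qed

lemma dim_union_closure_points:
  "finite U \<Longrightarrow> X \<subseteq> A \<Longrightarrow> U \<subseteq> cl X \<Longrightarrow> d (X \<union> U) = d X"
proof (induction U rule: finite_induct)
  case empty then show ?case by simp
next
  case (insert y U)
  have y: "y \<in> A" "d (X \<union> {y}) = d X" using insert.prems unfolding pg_cl_def by auto
  have XU: "X \<union> U \<subseteq> A" using insert.prems closure_subset_A by blast
  have "d ((X \<union> U) \<union> (X \<union> {y})) + d ((X \<union> U) \<inter> (X \<union> {y})) \<le> d (X \<union> U) + d (X \<union> {y})"
    by (rule dim_submodular) (use XU y in auto)
  moreover have "(X \<union> U) \<union> (X \<union> {y}) = X \<union> insert y U" by auto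
  moreover have "d X \<le> d ((X \<union> U) \<inter> (X \<union> {y}))" by (rule dim_mono) (use XU in auto)
  moreover have "d (X \<union> U) \<le> d (X \<union> insert y U)" by (rule dim_mono) (use XU y in auto)
  ultimately show ?case using insert.IH[OF insert.prems(1)] insert.prems y by auto
qed

lemma dim_closure: "X \<subseteq> A \<Longrightarrow> d (cl X) = d X"
  using dim_union_closure_points[of "cl X" X] closure_extensive[of X]
    finite_subset_A[OF closure_subset_A] by (simp add: Un_absorb1)

lemma closure_idem: "X \<subseteq> A \<Longrightarrow> cl (cl X) = cl X"
proof
  assume X: "X \<subseteq> A"
  show "cl X \<subseteq> cl (cl X)" by (rule closure_extensive[OF closure_subset_A])
  show "cl (cl X) \<subseteq> cl X"
  proof
    fix y assume "y \<in> cl (cl X)"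
    then have y: "y \<in> A" "d (cl X \<union> {y}) = d (cl X)" unfolding pg_cl_def by auto
    have "d (X \<union> {y}) \<le> d (cl X \<union> {y})"
      by (rule dim_mono) (use closure_extensive[OF X] closure_subset_A y in auto)
    moreover have "d X \<le> d (X \<union> {y})" by (rule dim_mono) (use X y in auto)
    ultimately have "d (X \<union> {y}) = d X" using y dim_closure[OF X] by linarith
    then show "y \<in> cl X" using y unfolding pg_cl_def by auto
  qed
qed

lemma subset_flat_iff:
  assumes X: "X \<subseteq> A" and F: "F \<subseteq> A" "cl F = F"
  shows "X \<subseteq> F \<longleftrightarrow> cl X \<subseteq> F"
proof
  assume XF: "X \<subseteq> F"
  show "cl X \<subseteq> F"
  proof
    fix y assume "y \<in> cl X"
    then have y: "y \<in> A" "d (X \<union> {y}) = d X" unfolding pg_cl_def by auto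
    have "d (F \<union> (X \<union> {y})) + d (F \<inter> (X \<union> {y})) \<le> d F + d (X \<union> {y})"
      by (rule dim_submodular) (use F X y in auto)
    moreover have "d (F \<union> (X \<union> {y})) = d (F \<union> {y})"
      using XF by (simp add: Un_absorb2 Un_assoc[symmetric] sup_commute)
    moreover have "d X \<le> d (F \<inter> (X \<union> {y}))" by (rule dim_mono) (use F XF in auto)
    moreover have "d F \<le> d (F \<union> {y})" by (rule dim_mono) (use F y in auto)
    ultimately have "d (F \<union> {y}) = d F" using y by linarith
    then show "y \<in> F" using y F unfolding pg_cl_def by blast
  qed
qed (use closure_extensive[OF X] in blast)

lemma delta_flat:
  assumes F: "F \<subseteq> A" "cl F = F"
  shows "delta R F = d F"
proof -
  obtain Y where Y: "F \<subseteq> Y" "Y \<subseteq> A" "delta R Y = d F" using dim_attained[OF F(1)] .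
  have "Y \<subseteq> F"
  proof
    fix y assume "y \<in> Y"
    have "d F \<le> d (F \<union> {y})" "d (F \<union> {y}) \<le> d Y"
      using Y \<open>y \<in> Y\<close> F by (auto intro: dim_mono)
    moreover have "d Y \<le> delta R Y" using Y(2) by (rule dim_le[OF subset_refl])
    ultimately have "d (F \<union> {y}) = d F" using Y by linarith
    then show "y \<in> F" using F Y \<open>y \<in> Y\<close> unfolding pg_cl_def by blast
  qed
  then show ?thesis using Y by auto
qed

end

lemma in_C_iff: "in_C k A R \<longleftrightarrow> set_system A R \<and> (\<forall>r\<in>R. enat (card r) \<le> k)"
  unfolding in_C_def set_system_def by blast

lemma dim_eq_if_same_closure:
  assumes P: "set_system A P" and Q: "set_system A Q"
    and same: "\<forall>X. X \<subseteq> A \<longrightarrow> pg_cl A P X = pg_cl A Q X"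
    and X: "X \<subseteq> A"
  shows "dim A P X = dim A Q X"
  using set_system.finite_subset_A[OF P X] X
proof (induction X rule: finite_induct)
  case empty then show ?case using set_system.dim_empty[OF P] set_system.dim_empty[OF Q] by simp
next
  case (insert x X)
  then show ?case using set_system.dim_insert[OF P, of X x] set_system.dim_insert[OF Q, of X x] same
    by auto
qed

text \<open>Since shrinking also never
  raises the predimension, the shrunk family computes the same dimension function.\<close>

locale shrinking = set_system +
  fixes g :: "'a set \<Rightarrow> 'a set"
  assumes shrinks: "\<forall>r\<in>R. g r \<subseteq> r \<and> g r \<noteq> {}"
    and dim_le_defect: "\<forall>X. X \<subseteq> A \<longrightarrow> d X \<le> defect R g X"
begin

abbreviation "D \<equiv> defect R g"
abbreviation "N \<equiv> covered R g"

lemma shrunk_subset_A: "r \<in> R \<Longrightarrow> g r \<subseteq> A"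
  using shrinks edges by blast

lemma finite_shrunk: "r \<in> R \<Longrightarrow> finite (g r)"
  using shrunk_subset_A finite_subset_A by blast

lemma dim_le_D: "X \<subseteq> A \<Longrightarrow> d X \<le> D X"
  using dim_le_defect by blast

lemma D_le_delta: "D X \<le> delta R X"
proof -
  have "card {r\<in>R. id r \<subseteq> X} \<le> card {r\<in>R. g r \<subseteq> X}"
    by (rule card_mono) (use finite_R shrinks in auto)
  then show ?thesis unfolding delta_eq_defect defect_def covered_def by simp
qed

lemma covered_strict_mono:
  assumes "X \<subseteq> Y" "r \<in> R" "g r \<subseteq> Y" "\<not> g r \<subseteq> X"
  shows "N X < N Y"
  unfolding covered_def by (rule psubset_card_mono) (use finite_R assms in auto)

lemma tight_superset:
  assumes "X \<subseteq> A"
  obtains Y where "X \<subseteq> Y" "Y \<subseteq> A" "D Y \<le> d X"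
proof -
  obtain Y where "X \<subseteq> Y" "Y \<subseteq> A" "delta R Y = d X" using dim_attained[OF assms] .
  then show ?thesis using that D_le_delta[of Y] by simp
qed

lemma tight_D_min: "D X \<le> d X \<Longrightarrow> X \<subseteq> Z \<Longrightarrow> Z \<subseteq> A \<Longrightarrow> D X \<le> D Z"
  using dim_mono[of X Z] dim_le_D[of Z] by linarith

lemma D_submodular: "X \<subseteq> A \<Longrightarrow> Y \<subseteq> A \<Longrightarrow> D (X \<union> Y) + D (X \<inter> Y) \<le> D X + D Y"
  by (rule defect_submodular[OF finite_R]) (auto intro: finite_subset_A)

lemma tight_Int:
  assumes X: "X \<subseteq> A" "D X \<le> d X" and Y: "Y \<subseteq> A" "D Y \<le> d Y"
  shows "D (X \<inter> Y) \<le> d (X \<inter> Y)"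
proof -
  obtain Z where Z: "X \<inter> Y \<subseteq> Z" "Z \<subseteq> A" "D Z \<le> d (X \<inter> Y)"
    using tight_superset[of "X \<inter> Y"] X by blast
  have "D X \<le> D (Z \<union> X)" by (rule tight_D_min) (use X Z in auto)
  with D_submodular[OF Z(2) X(1)] have "D (Z \<inter> X) \<le> D Z" by linarith
  moreover have "D Y \<le> D ((Z \<inter> X) \<union> Y)" by (rule tight_D_min) (use X Y Z in auto)
  moreover have "D ((Z \<inter> X) \<union> Y) + D ((Z \<inter> X) \<inter> Y) \<le> D (Z \<inter> X) + D Y"
    using X Y by (intro D_submodular) auto
  ultimately have "D ((Z \<inter> X) \<inter> Y) \<le> D Z" by linarith
  moreover have "(Z \<inter> X) \<inter> Y = X \<inter> Y" using Z(1) by auto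
  ultimately show ?thesis using Z(3) by simp
qed

lemma tight_hull:
  assumes "c \<subseteq> A"
  obtains H where "c \<subseteq> H" "H \<subseteq> A" "D H \<le> d H"
    "\<And>Y. c \<subseteq> Y \<Longrightarrow> Y \<subseteq> A \<Longrightarrow> D Y \<le> d Y \<Longrightarrow> H \<subseteq> Y"
proof -
  define P where "P Y \<longleftrightarrow> c \<subseteq> Y \<and> Y \<subseteq> A \<and> D Y \<le> d Y" for Y
  obtain Y where "A \<subseteq> Y" "Y \<subseteq> A" "D Y \<le> d A" using tight_superset[of A] by blast
  then have "P A" unfolding P_def using assms by auto
  then obtain H where H: "P H" and least: "\<And>Y. P Y \<Longrightarrow> card H \<le> card Y"
    using ex_has_least_nat[of P A card] by blast
  have H_least: "H \<subseteq> Y" if Y: "P Y" for Y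
  proof -
    have "D (H \<inter> Y) \<le> d (H \<inter> Y)" using H Y unfolding P_def by (intro tight_Int) auto
    then have "P (H \<inter> Y)" using H Y unfolding P_def by auto
    then have "card H \<le> card (H \<inter> Y)" by (rule least)
    moreover have "finite H" using H finite_subset_A unfolding P_def by blast
    ultimately have "H \<inter> Y = H" by (intro card_seteq) auto
    then show ?thesis by blast
  qed
  show ?thesis
  proof (rule that)
    show "c \<subseteq> H" "H \<subseteq> A" "D H \<le> d H" using H unfolding P_def by auto
    show "H \<subseteq> Y" if "c \<subseteq> Y" "Y \<subseteq> A" "D Y \<le> d Y" for Y
      using H_least that unfolding P_def by blast
  qed
qed

lemma blocked_if_not_shrinkable:
  assumes r0: "r0 \<in> R" and x: "x \<in> g r0" and ne: "g r0 - {x} \<noteq> {}"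
    and fails: "\<not> shrinking A R (g(r0 := g r0 - {x}))"
  shows "\<exists>X. X \<subseteq> A \<and> g r0 - {x} \<subseteq> X \<and> x \<notin> X \<and> D X \<le> d X"
proof -
  define g' where "g' = g(r0 := g r0 - {x})"
  have "\<forall>r\<in>R. g' r \<subseteq> r \<and> g' r \<noteq> {}" using shrinks r0 ne unfolding g'_def by auto
  moreover have "\<not> shrinking A R g'" using fails unfolding g'_def .
  ultimately obtain X where X: "X \<subseteq> A" "defect R g' X < d X"
    using set_system_axioms unfolding shrinking_def shrinking_axioms_def not_le[symmetric] by blast
  show ?thesis
  proof (cases "g r0 - {x} \<subseteq> X \<and> x \<notin> X")
    case True
    have "{r\<in>R. g' r \<subseteq> X} = insert r0 {r\<in>R. g r \<subseteq> X}"
      using True r0 by (auto simp: g'_def)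
    moreover have "r0 \<notin> {r\<in>R. g r \<subseteq> X}" using True x by blast
    ultimately have "defect R g' X = D X - 1"
      unfolding defect_def covered_def using finite_R by simp
    then have "D X \<le> d X" using X(2) by linarith
    then show ?thesis using True X(1) by blast
  next
    case False
    then have "g' r \<subseteq> X \<longleftrightarrow> g r \<subseteq> X" for r
      by (cases "r = r0") (use x in \<open>auto simp: g'_def\<close>)
    then have "defect R g' X = D X" unfolding defect_def covered_def by simp
    then show ?thesis using X dim_le_D[of X] by linarith
  qed
qed

context
  fixes r0 H
  assumes r0: "r0 \<in> R"
    and blocked: "\<And>x. x \<in> g r0 \<Longrightarrow> \<exists>X. X \<subseteq> A \<and> g r0 - {x} \<subseteq> X \<and> x \<notin> X \<and> D X \<le> d X"
    and hull: "g r0 \<subseteq> H" "H \<subseteq> A" "D H \<le> d H"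
    and hull_least: "\<And>Y. g r0 \<subseteq> Y \<Longrightarrow> Y \<subseteq> A \<Longrightarrow> D Y \<le> d Y \<Longrightarrow> H \<subseteq> Y"
begin

lemma hull_minus_point:
  assumes x: "x \<in> g r0"
  shows "D (H - {x}) \<le> d (H - {x})" "N (H - {x}) + 1 = N H"
proof -
  obtain X where X: "X \<subseteq> A" "g r0 - {x} \<subseteq> X" "x \<notin> X" "D X \<le> d X"
    using blocked[OF x] by blast
  define W where "W = X \<inter> H"
  have WA: "W \<subseteq> A" and xW: "x \<notin> W" and coreW: "g r0 - {x} \<subseteq> W"
    unfolding W_def using X hull by auto
  have W_tight: "D W \<le> d W" unfolding W_def by (rule tight_Int[OF X(1,4) hull(2,3)])
  have xA: "x \<in> A" using x hull by blast
  have "N W < N (insert x W)" by (rule covered_strict_mono[OF _ r0]) (use coreW xW x in auto)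
  moreover have "card (insert x W) = Suc (card W)" using finite_subset_A[OF WA] xW by simp
  ultimately have "D (insert x W) \<le> D W" unfolding defect_def by simp
  moreover have "d W \<le> d (insert x W)" using WA xA by (intro dim_mono) auto
  ultimately have "D (insert x W) \<le> d (insert x W)" using W_tight by linarith
  then have "H \<subseteq> insert x W" using coreW WA xA by (intro hull_least) auto
  then have WH: "W = H - {x}" using xW unfolding W_def by blast
  show tight: "D (H - {x}) \<le> d (H - {x})" using W_tight WH by simp
  have "d (H - {x}) \<le> d H" using hull(2) by (intro dim_mono) auto
  moreover have "d H \<le> D H" using hull(2) by (rule dim_le_D)
  moreover have "card (H - {x}) + 1 = card H"
    using x hull(1) finite_subset_A[OF hull(2)] by (metis Suc_eq_plus1 card_Suc_Diff1 subsetD)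
  ultimately have "N H \<le> N (H - {x}) + 1" using tight unfolding defect_def by linarith
  moreover have "N (H - {x}) < N H" by (rule covered_strict_mono[OF _ r0]) (use x hull in auto)
  ultimately show "N (H - {x}) + 1 = N H" by simp
qed

lemma hull_point_unique:
  assumes x: "x \<in> g r0" and r: "r \<in> R" "g r \<subseteq> H" "x \<in> g r"
  shows "r = r0"
proof (rule ccontr)
  assume ne: "r \<noteq> r0"
  let ?S = "{q\<in>R. g q \<subseteq> H - {x}}"
  have S_fin: "finite ?S" and H_fin: "finite {q\<in>R. g q \<subseteq> H}" using finite_R by simp_all
  have "r0 \<notin> ?S" using x by blast
  moreover have "r \<notin> insert r0 ?S" using r(3) ne by blast
  ultimately have "card (insert r (insert r0 ?S)) = Suc (Suc (N (H - {x})))"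
    using S_fin unfolding covered_def by simp
  moreover have "insert r (insert r0 ?S) \<subseteq> {q\<in>R. g q \<subseteq> H}" using r0 r(1,2) hull(1) by blast
  then have "card (insert r (insert r0 ?S)) \<le> N H" unfolding covered_def by (rule card_mono[OF H_fin])
  ultimately have "Suc (Suc (N (H - {x}))) \<le> N H" by simp
  then show False using hull_minus_point(2)[OF x] by simp
qed

lemma hull_minus_core_tight: "D (H - g r0) \<le> d (H - g r0)"
proof -
  have "D (H - Y) \<le> d (H - Y)" if "finite Y" "Y \<noteq> {}" "Y \<subseteq> g r0" for Y
    using that
  proof (induction Y rule: finite_ne_induct)
    case (singleton x) then show ?case using hull_minus_point by simp
  next
    case (insert x Y)
    have "H - insert x Y = (H - {x}) \<inter> (H - Y)" by auto
    then show ?case using tight_Int[of "H - {x}" "H - Y"] hull insert hull_minus_point by auto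
  qed
  then show ?thesis using finite_shrunk[OF r0] shrinks r0 by blast
qed

lemma hull_covered: "N H = Suc (N (H - g r0))"
proof -
  have "{r\<in>R. g r \<subseteq> H} = insert r0 {r\<in>R. g r \<subseteq> H - g r0}"
    using r0 hull hull_point_unique by blast
  moreover have "r0 \<notin> {r\<in>R. g r \<subseteq> H - g r0}" using r0 shrinks by auto
  ultimately show ?thesis unfolding covered_def using finite_R by simp
qed

lemma blocked_full_rank:
  assumes x0: "x0 \<in> g r0"
  shows "int (card (g r0)) - 1 \<le> d (g r0 - {x0})"
proof -
  have H_fin: "finite H" using finite_subset_A[OF hull(2)] .
  have H_tight: "d H = D H" using hull(3) dim_le_D[OF hull(2)] by linarith
  have "card (H - g r0) + card (g r0) = card H"
    using hull(1) H_fin by (metis card_Diff_subset card_mono finite_subset le_add_diff_inverse2)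
  moreover have "d (H - g r0) = D (H - g r0)"
    using hull_minus_core_tight dim_le_D[of "H - g r0"] hull(2) by fastforce
  ultimately have core: "d (H - g r0) = D H - int (card (g r0)) + 1"
    using hull_covered unfolding defect_def by simp
  have "card (H - {x0}) + 1 = card H"
    using x0 hull(1) H_fin by (metis Suc_eq_plus1 card_Suc_Diff1 subsetD)
  then have "D (H - {x0}) = D H" using hull_minus_point(2)[OF x0] unfolding defect_def by simp
  moreover have "d (H - {x0}) = D (H - {x0})"
    using hull_minus_point(1)[OF x0] dim_le_D[of "H - {x0}"] hull(2) by fastforce
  ultimately have point: "d (H - {x0}) = d H" using H_tight by simp
  have "d ((H - g r0) \<union> (g r0 - {x0})) + d ((H - g r0) \<inter> (g r0 - {x0}))
      \<le> d (H - g r0) + d (g r0 - {x0})"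
    by (rule dim_submodular) (use hull in auto)
  moreover have "(H - g r0) \<union> (g r0 - {x0}) = H - {x0}" "(H - g r0) \<inter> (g r0 - {x0}) = {}"
    using hull(1) x0 by auto
  ultimately show ?thesis using point core H_tight dim_empty by simp
qed

end

lemma shrink_step:
  assumes r0: "r0 \<in> R" and x0: "x0 \<in> g r0" and low: "d (g r0 - {x0}) < int (card (g r0)) - 1"
  shows "\<exists>x\<in>g r0. shrinking A R (g(r0 := g r0 - {x}))"
proof (rule ccontr)
  assume none: "\<not> ?thesis"
  have "g r0 - {x} \<noteq> {}" if "x \<in> g r0" for x
  proof
    assume "g r0 - {x} = {}"
    then have "g r0 = {x0}" using that x0 by auto
    then show False using low dim_empty by simp
  qed
  then have blocked: "\<And>x. x \<in> g r0 \<Longrightarrow> \<exists>X. X \<subseteq> A \<and> g r0 - {x} \<subseteq> X \<and> x \<notin> X \<and> D X \<le> d X"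
    using blocked_if_not_shrinkable[OF r0] none by blast
  obtain H where "g r0 \<subseteq> H" "H \<subseteq> A" "D H \<le> d H"
    "\<And>Y. g r0 \<subseteq> Y \<Longrightarrow> Y \<subseteq> A \<Longrightarrow> D Y \<le> d Y \<Longrightarrow> H \<subseteq> Y"
    using tight_hull[OF shrunk_subset_A[OF r0]] by blast
  from blocked_full_rank[OF r0 blocked this x0] show False using low by simp
qed

end

lemma (in set_system) shrinking_id: "shrinking A R id"
proof -
  have "d X \<le> defect R id X" if "X \<subseteq> A" for X
    using dim_le[OF subset_refl that] by (simp add: delta_eq_defect)
  then show ?thesis unfolding shrinking_def shrinking_axioms_def using set_system_axioms edges by auto
qed

text \<open>A shrinking of minimal total size exists, and in it every shrunk set is a circuit:
  removing any point leaves a set of full rank (otherwise shrink_step would shrink further).\<close>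

lemma (in set_system) minimal_shrinking:
  obtains g where "shrinking A R g"
    "\<And>r x. r \<in> R \<Longrightarrow> x \<in> g r \<Longrightarrow> int (card (g r)) - 1 \<le> d (g r - {x})"
proof -
  define size where "size g = (\<Sum>r\<in>R. card (g r))" for g :: "'a set \<Rightarrow> 'a set"
  obtain g where g: "shrinking A R g" and min: "\<And>g'. shrinking A R g' \<Longrightarrow> size g \<le> size g'"
    using ex_has_least_nat[of "shrinking A R" id size] shrinking_id by blast
  have circuits: "int (card (g r)) - 1 \<le> d (g r - {x})" if r: "r \<in> R" and x: "x \<in> g r" for r x
  proof (rule ccontr)
    assume "\<not> ?thesis"
    then obtain y where y: "y \<in> g r" and shrunk: "shrinking A R (g(r := g r - {y}))"
      using shrinking.shrink_step[OF g r x] by (auto simp: not_le)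
    have "card (g r - {y}) < card (g r)"
      using card_Diff1_less[OF shrinking.finite_shrunk[OF g r] y] .
    then have "size (g(r := g r - {y})) < size g"
      unfolding size_def using finite_R r by (intro sum_strict_mono_ex1) auto
    then show False using min[OF shrunk] by simp
  qed
  show ?thesis using g circuits by (rule that)
qed

context shrinking
begin

lemma covered_flat:
  assumes "F \<subseteq> A" "cl F = F"
  shows "int (N F) = int (card F) - d F"
proof -
  have "D F = d F" using dim_le_D[OF assms(1)] D_le_delta[of F] delta_flat[OF assms] by linarith
  then show ?thesis by (simp add: defect_def)
qed

text \<open>Comparison with a presentation S of the same matroid: for every flat G, as many
  shrunk sets as sets of S have closure G (inversion of the counts of covered_flat).\<close>

lemma closure_fibres:
  assumes S: "set_system A S" and same: "\<forall>X. X \<subseteq> A \<longrightarrow> pg_cl A S X = cl X"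
    and G: "G \<subseteq> A" "cl G = G"
  shows "card {r\<in>R. cl (g r) = G} = card {s\<in>S. cl s = G}"
proof -
  define Fl where "Fl = {F. F \<subseteq> A \<and> cl F = F}"
  have S_edges: "\<forall>s\<in>S. s \<subseteq> A" using set_system.edges[OF S] by blast
  show ?thesis
  proof (rule card_fibres_eq[of Fl])
    show "finite Fl" unfolding Fl_def using finite_A by simp
    show "\<forall>F\<in>Fl. finite F" unfolding Fl_def using finite_subset_A by blast
    show "\<forall>r\<in>R. cl (g r) \<in> Fl" unfolding Fl_def using closure_subset_A closure_idem shrunk_subset_A by blast
    show "\<forall>s\<in>S. cl s \<in> Fl" unfolding Fl_def using closure_subset_A closure_idem S_edges by blast
    show "G \<in> Fl" unfolding Fl_def using G by blast
    show "finite R" "finite S" using finite_R set_system.finite_R[OF S] .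
    show "\<forall>F\<in>Fl. card {r\<in>R. cl (g r) \<subseteq> F} = card {s\<in>S. cl s \<subseteq> F}"
    proof
      fix F assume "F \<in> Fl"
      then have F: "F \<subseteq> A" "cl F = F" unfolding Fl_def by auto
      have "{r\<in>R. cl (g r) \<subseteq> F} = {r\<in>R. g r \<subseteq> F}"
        using subset_flat_iff[OF _ F] shrunk_subset_A by blast
      then have lhs: "int (card {r\<in>R. cl (g r) \<subseteq> F}) = int (card F) - d F"
        using covered_flat[OF F] unfolding covered_def by simp
      have "{s\<in>S. cl s \<subseteq> F} = R_in S F"
        unfolding R_in_def using subset_flat_iff[OF _ F] S_edges by blast
      moreover have "delta S F = dim A S F"
        using set_system.delta_flat[OF S F(1)] same F by simp
      moreover have "dim A S F = d F"
        using dim_eq_if_same_closure[OF S set_system_axioms same F(1)] .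
      ultimately have rhs: "int (card {s\<in>S. cl s \<subseteq> F}) = int (card F) - d F"
        unfolding delta_def by simp
      show "card {r\<in>R. cl (g r) \<subseteq> F} = card {s\<in>S. cl s \<subseteq> F}" using lhs rhs by simp
    qed
  qed
qed

context
  assumes circuits: "\<And>r x. r \<in> R \<Longrightarrow> x \<in> g r \<Longrightarrow> int (card (g r)) - 1 \<le> d (g r - {x})"
begin

lemma dim_shrunk_ge: "r \<in> R \<Longrightarrow> int (card (g r)) - 1 \<le> d (g r)"
proof -
  assume r: "r \<in> R"
  then obtain x where x: "x \<in> g r" using shrinks by blast
  have "d (g r - {x}) \<le> d (g r)" using shrunk_subset_A[OF r] by (intro dim_mono) auto
  then show ?thesis using circuits[OF r x] by simp
qed

lemma inj_shrunk: "inj_on g R"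
proof (rule inj_onI, rule ccontr)
  fix r r' assume r: "r \<in> R" and r': "r' \<in> R" and eq: "g r = g r'" and ne: "r \<noteq> r'"
  have "card {r, r'} \<le> N (g r)"
    unfolding covered_def by (rule card_mono) (use finite_R r r' eq in auto)
  then have "2 \<le> N (g r)" using ne by simp
  then have "d (g r) \<le> int (card (g r)) - 2"
    using dim_le_D[OF shrunk_subset_A[OF r]] unfolding defect_def by linarith
  then show False using dim_shrunk_ge[OF r] by linarith
qed

lemma card_shrunk_le:
  assumes S: "set_system A S" and same: "\<forall>X. X \<subseteq> A \<longrightarrow> pg_cl A S X = cl X"
    and S_bound: "\<forall>s\<in>S. card s \<le> k" and r: "r \<in> R"
  shows "card (g r) \<le> k"
proof -
  have G: "cl (g r) \<subseteq> A" "cl (cl (g r)) = cl (g r)"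
    using closure_subset_A closure_idem[OF shrunk_subset_A[OF r]] by auto
  have "card {q\<in>R. cl (g q) = cl (g r)} \<noteq> 0" using r finite_R by auto
  then have "{s\<in>S. cl s = cl (g r)} \<noteq> {}" using closure_fibres[OF S same G] by force
  then obtain s where s: "s \<in> S" "cl s = cl (g r)" by blast
  have sA: "s \<subseteq> A" using s(1) set_system.edges[OF S] by blast
  have "s \<in> R_in S s" unfolding R_in_def using s(1) by simp
  moreover have "finite (R_in S s)" using set_system.finite_R[OF S] unfolding R_in_def by simp
  ultimately have "card (R_in S s) \<ge> 1" by (metis One_nat_def Suc_leI card_gt_0_iff empty_iff)
  then have "dim A S s \<le> int (card s) - 1"
    using set_system.dim_le[OF S subset_refl sA] unfolding delta_def by linarith
  moreover have "dim A S s = d s" using dim_eq_if_same_closure[OF S set_system_axioms same sA] .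
  moreover have "d s = d (g r)"
    using dim_closure[OF sA] dim_closure[OF shrunk_subset_A[OF r]] s(2) by simp
  ultimately show ?thesis using dim_shrunk_ge[OF r] S_bound s(1) by fastforce
qed

end

context
  assumes inj: "inj_on g R"
begin

lemma delta_image: "delta (g ` R) X = D X"
proof -
  have "R_in (g ` R) X = g ` {r\<in>R. g r \<subseteq> X}" unfolding R_in_def by auto
  moreover have "inj_on g {r\<in>R. g r \<subseteq> X}" using inj by (rule inj_on_subset) auto
  ultimately show ?thesis unfolding delta_def defect_def covered_def by (simp add: card_image)
qed

lemma set_system_image: "set_system A (g ` R)"
proof
  show "finite A" by (rule finite_A)
  show "\<forall>r\<in>g ` R. finite r \<and> r \<noteq> {} \<and> r \<subseteq> A"
    using shrinks shrunk_subset_A finite_shrunk by auto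
  show "\<forall>X. X \<subseteq> A \<longrightarrow> 0 \<le> delta (g ` R) X"
  proof (intro allI impI)
    fix X assume X: "X \<subseteq> A"
    show "0 \<le> delta (g ` R) X" using dim_le_D[OF X] dim_nonneg[OF X] delta_image[of X] by linarith
  qed
qed

lemma dim_image: "X \<subseteq> A \<Longrightarrow> dim A (g ` R) X = d X"
proof -
  assume X: "X \<subseteq> A"
  obtain Y where Y: "X \<subseteq> Y" "Y \<subseteq> A" "D Y \<le> d X" using tight_superset[OF X] .
  have "dim A (g ` R) X \<le> d X"
    using set_system.dim_le[OF set_system_image Y(1,2)] Y(3) delta_image by simp
  moreover obtain Z where Z: "X \<subseteq> Z" "Z \<subseteq> A" "delta (g ` R) Z = dim A (g ` R) X"
    using set_system.dim_attained[OF set_system_image X] .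
  then have "d X \<le> dim A (g ` R) X"
    using dim_mono[OF Z(1,2)] dim_le_D[OF Z(2)] delta_image by simp
  ultimately show ?thesis by simp
qed

lemma closure_image: "X \<subseteq> A \<Longrightarrow> pg_cl A (g ` R) X = cl X"
  unfolding pg_cl_def using dim_image by auto

lemma self_sufficient_image:
  assumes C: "self_sufficient A R C"
  shows "self_sufficient A (g ` R) C"
  unfolding self_sufficient_def
proof (intro conjI allI impI)
  show CA: "C \<subseteq> A" using C unfolding self_sufficient_def by blast
  fix X assume X: "C \<subseteq> X \<and> X \<subseteq> A"
  obtain Y where Y: "C \<subseteq> Y" "Y \<subseteq> A" "delta R Y = d C" using dim_attained[OF CA] .
  have "D C \<le> delta R C" by (rule D_le_delta)
  also have "\<dots> \<le> delta R Y" using C Y unfolding self_sufficient_def by blast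
  also have "\<dots> \<le> d X" using Y dim_mono X by simp
  also have "\<dots> \<le> D X" using X dim_le_D by blast
  finally show "delta (g ` R) C \<le> delta (g ` R) X" using delta_image by simp
qed

end

end

lemma (in set_system) bounded_presentation:
  assumes S: "set_system A S" and same: "\<forall>X. X \<subseteq> A \<longrightarrow> pg_cl A S X = cl X"
    and S_bound: "\<forall>s\<in>S. card s \<le> k" and C: "self_sufficient A R C"
  obtains T where "in_C (enat k) A T" "\<forall>X. X \<subseteq> A \<longrightarrow> pg_cl A T X = cl X"
    "self_sufficient A T C"
proof -
  obtain g where g: "shrinking A R g"
    and circuits: "\<And>r x. r \<in> R \<Longrightarrow> x \<in> g r \<Longrightarrow> int (card (g r)) - 1 \<le> d (g r - {x})"
    using minimal_shrinking by blast
  have inj: "inj_on g R" by (rule shrinking.inj_shrunk[OF g circuits])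
  have "in_C (enat k) A (g ` R)"
    unfolding in_C_iff using shrinking.set_system_image[OF g inj]
      shrinking.card_shrunk_le[OF g circuits S same S_bound] by auto
  moreover have "\<forall>X. X \<subseteq> A \<longrightarrow> pg_cl A (g ` R) X = cl X"
    using shrinking.closure_image[OF g inj] by blast
  moreover have "self_sufficient A (g ` R) C" by (rule shrinking.self_sufficient_image[OF g inj C])
  ultimately show ?thesis by (rule that)
qed

theorem mainTheorem12:
  fixes k :: nat and A :: "'a set" and cl :: "'a set \<Rightarrow> 'a set" and C :: "'a set"
  assumes "k \<ge> 3"
    and "in_PG (enat k) A cl"
    and "C \<subseteq> A"
    and "strong_sub \<infinity> A cl C"
  shows "strong_sub (enat k) A cl C"
proof -
  obtain R where R: "presentation \<infinity> A cl R" and C: "self_sufficient A R C"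
    using assms(4) unfolding strong_sub_def by blast
  obtain S where S: "presentation (enat k) A cl S"
    using assms(2) unfolding in_PG_def by blast
  have R_sys: "set_system A R" and R_cl: "\<forall>X. X \<subseteq> A \<longrightarrow> pg_cl A R X = cl X"
    using R unfolding presentation_def in_C_iff by auto
  have S_sys: "set_system A S" and S_bound: "\<forall>s\<in>S. card s \<le> k"
    and same: "\<forall>X. X \<subseteq> A \<longrightarrow> pg_cl A S X = pg_cl A R X"
    using S R_cl unfolding presentation_def in_C_iff by auto
  obtain T where "in_C (enat k) A T" "\<forall>X. X \<subseteq> A \<longrightarrow> pg_cl A T X = pg_cl A R X"
    "self_sufficient A T C"
    using set_system.bounded_presentation[OF R_sys S_sys same S_bound C] by blast
  then show ?thesis unfolding strong_sub_def presentation_def using R_cl by auto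
qed

end
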